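(* Let $S\ge 2$, $m\ge 1$ and $n_1,\ldots,n_S\ge 1$ be integers, and put $n=\sum_{s=1}^S n_s$. Let $x_{sij}\in\mathbb{R}$ for $s=1,\ldots,S$, $i=1,\ldots,m$, $j=1,\ldots,n_s$. Let $\sigma_1^2,\ldots,\sigma_m^2>0$ and $\alpha_1,\ldots,\alpha_m>0$ be fixed constants. Consider the objective $$f(\mu,\gamma,d)=\sum_{i=1}^m\frac{1}{2\sigma_i^2}\Big(\sum_{j=1}^{n_1}(x_{1ij}-\mu_i-d_{1j})^2+\sum_{s=2}^S\sum_{j=1}^{n_s}(x_{sij}-\mu_i-\gamma_{si}-d_{sj})^2\Big)+\sum_{i=1}^m\alpha_i\,\mathbf{1}\Big(\sum_{s=2}^S|\gamma_{si}|>0\Big).$$ Here the variables are $\mu=(\mu_i)_{i=1}^m\in\mathbb{R}^m$, $\gamma=(\gamma_{si})_{2\le s\le S,\,1\le i\le m}$ with real entries, and $d=(d_{sj})_{1\le s\le S,\,1\le j\le n_s}$ with real entries. The objective $f$ is to be minimized subject to the constraint $d_{11}=0$. Define the following quantities: - for $s=1,\ldots,S$ and $j=1,\ldots,n_s$, $$d'_{sj}=\frac{\sum_{i=1}^m (x_{sij}-x_{si1})/\sigma_i^2}{\sum_{i=1}^m 1/\sigma_i^2};$$ - for $s=1,\ldots,S$ and $i=1,\ldots,m$, $$\mu'_{si}=\frac{1}{n_s}\sum_{j=1}^{n_s}(x_{sij}-d'_{sj}).$$ With the convention $d_1=0$, define for each $i$ the function of $(d_2,\ldots,d_S)\in\mathbb{R}^{S-1}$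 $$g_i(d_2,\ldots,d_S)=\frac{1}{2\sigma_i^2}\Big\{\sum_{s=1}^S n_s(\mu'_{si}-d_s)^2-\frac1n\Big[\sum_{s=1}^S n_s(\mu'_{si}-d_s)\Big]^2\Big\},$$ and put $$G(d_2,\ldots,d_S)=\sum_{i=1}^m\min\big(g_i(d_2,\ldots,d_S),\alpha_i\big).$$ Let $(d_2,\ldots,d_S)$ be any minimizer of $G$ over $\mathbb{R}^{S-1}$, and set $d_1=0$. Define: - $d_{sj}=d_s+d'_{sj}$ for all $s,j$; - for each $i$ with $g_i(d_2,\ldots,d_S)<\alpha_i$: $\gamma_{si}=0$ for $s=2,\ldots,S$, and $\mu_i=\frac1n\sum_{s=1}^S n_s(\mu'_{si}-d_s)$; - for each $i$ with $g_i(d_2,\ldots,d_S)\ge\alpha_i$: $\gamma_{si}=\mu'_{si}-\mu'_{1i}-d_s$ for $s=2,\ldots,S$, and $\mu_i=\mu'_{1i}$. Then the triple $(\mu,\gamma,d)$ so defined satisfies $d_{11}=0$ and is a global minimizer of $f$ among all $(\mu,\gamma,d)$ with $d_{11}=0$.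
   Context: This is the penalized (L0) negative log-likelihood for the model $x_{sij}\sim N(\mu_i+\gamma_{si}\mathbf 1(s\ge2)+d_{sj},\sigma_i^2)$ with known variances. $\mathbf{1}(\cdot)$ denotes the indicator function. *)

theory Defs
  imports Complex_Main
begin

(* Indices are 1-based: s \<in> {1..S}, i \<in> {1..m}, j \<in> {1..ns s}.
   sig2 i is the variance sigma_i^2.  Vectors are functions on nat; only the
   values at indices in range matter. *)

definition obj :: "nat \<Rightarrow> nat \<Rightarrow> (nat \<Rightarrow> nat) \<Rightarrow> (nat \<Rightarrow> nat \<Rightarrow> nat \<Rightarrow> real)
   \<Rightarrow> (nat \<Rightarrow> real) \<Rightarrow> (nat \<Rightarrow> real)
   \<Rightarrow> (nat \<Rightarrow> real) \<Rightarrow> (nat \<Rightarrow> nat \<Rightarrow> real) \<Rightarrow> (nat \<Rightarrow> nat \<Rightarrow> real) \<Rightarrow> real" where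
  "obj S m ns x sig2 alpha mu gam d =
     (\<Sum>i=1..m. 1 / (2 * sig2 i) *
        ((\<Sum>j=1..ns 1. (x 1 i j - mu i - d 1 j)\<^sup>2)
         + (\<Sum>s=2..S. \<Sum>j=1..ns s. (x s i j - mu i - gam s i - d s j)\<^sup>2)))
   + (\<Sum>i=1..m. alpha i * (if (\<Sum>s=2..S. \<bar>gam s i\<bar>) > 0 then 1 else 0))"

definition dprime :: "nat \<Rightarrow> (nat \<Rightarrow> nat \<Rightarrow> nat \<Rightarrow> real) \<Rightarrow> (nat \<Rightarrow> real) \<Rightarrow> nat \<Rightarrow> nat \<Rightarrow> real" where
  "dprime m x sig2 s j =
     (\<Sum>i=1..m. (x s i j - x s i 1) / sig2 i) / (\<Sum>i=1..m. 1 / sig2 i)"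

definition muprime :: "nat \<Rightarrow> (nat \<Rightarrow> nat) \<Rightarrow> (nat \<Rightarrow> nat \<Rightarrow> nat \<Rightarrow> real) \<Rightarrow> (nat \<Rightarrow> real)
   \<Rightarrow> nat \<Rightarrow> nat \<Rightarrow> real" where
  "muprime m ns x sig2 s i =
     (1 / real (ns s)) * (\<Sum>j=1..ns s. x s i j - dprime m x sig2 s j)"

(* g_i evaluated at D, where D s = d_s for s = 2..S; the convention d_1 = 0 is imposed
   by using D 1 = 0 in the statement. *)
definition gfun :: "nat \<Rightarrow> nat \<Rightarrow> (nat \<Rightarrow> nat) \<Rightarrow> (nat \<Rightarrow> nat \<Rightarrow> nat \<Rightarrow> real) \<Rightarrow> (nat \<Rightarrow> real)
   \<Rightarrow> nat \<Rightarrow> (nat \<Rightarrow> real) \<Rightarrow> real" where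
  "gfun S m ns x sig2 i D =
     1 / (2 * sig2 i) *
       ((\<Sum>s=1..S. real (ns s) * (muprime m ns x sig2 s i - D s)\<^sup>2)
        - (1 / real (\<Sum>s=1..S. ns s)) *
            (\<Sum>s=1..S. real (ns s) * (muprime m ns x sig2 s i - D s))\<^sup>2)"

definition Gfun :: "nat \<Rightarrow> nat \<Rightarrow> (nat \<Rightarrow> nat) \<Rightarrow> (nat \<Rightarrow> nat \<Rightarrow> nat \<Rightarrow> real) \<Rightarrow> (nat \<Rightarrow> real)
   \<Rightarrow> (nat \<Rightarrow> real) \<Rightarrow> (nat \<Rightarrow> real) \<Rightarrow> real" where
  "Gfun S m ns x sig2 alpha D = (\<Sum>i=1..m. min (gfun S m ns x sig2 i D) (alpha i))"

end

theory Submission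
  imports Defs
begin

(* For every batch s the observations x_{sij} form an m x n_s two-way table
   (feature i, sample j) fitted by row levels mu_i + gamma_{si} plus column shifts d_{sj}.
   With the weights 1/sigma_i^2, dprime s j is exactly the weighted column effect and
   muprime s i the row mean after removing it, so the weighted sum of squares splits
   orthogonally (an ANOVA decomposition) into
     residual (independent of the parameters) + column misfit (>= 0, zero at d = dhat)
     + sum_i of a one-feature cost in (mu_i, gamma_{.i}) that only sees the batch-level
       shifts of d through their means.
   Adding the L0 penalty, each one-feature cost is bounded below by min(g_i, alpha_i)
   (completing the square in mu_i when gamma_{.i} = 0), and the fitted values attain that
   bound at D.  Hence f(muhat, ghat, dhat) <= resid/2 + G(D) <= resid/2 + G(D') <= f(mu, gam, d),
   where D' are the relative batch shifts of d and the middle step is the minimality of D. *)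

lemma two_way_ss_orthogonal:
  fixes w r :: "'i \<Rightarrow> real" and c :: "'j \<Rightarrow> real" and e :: "'i \<Rightarrow> 'j \<Rightarrow> real"
  assumes rows: "\<And>i. i \<in> I \<Longrightarrow> (\<Sum>j\<in>J. e i j) = 0"
    and cols: "(\<Sum>j\<in>J. c j) = 0"
    and balanced: "\<And>j. j \<in> J \<Longrightarrow> (\<Sum>i\<in>I. w i * e i j) = K"
  shows "(\<Sum>i\<in>I. w i * (\<Sum>j\<in>J. (e i j + r i + c j)\<^sup>2)) =
           (\<Sum>i\<in>I. w i * (\<Sum>j\<in>J. (e i j)\<^sup>2))
         + real (card J) * (\<Sum>i\<in>I. w i * (r i)\<^sup>2)
         + (\<Sum>i\<in>I. w i) * (\<Sum>j\<in>J. (c j)\<^sup>2)"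
proof -
  have row_ss: "(\<Sum>j\<in>J. (e i j + r i + c j)\<^sup>2) =
      (\<Sum>j\<in>J. (e i j)\<^sup>2) + real (card J) * (r i)\<^sup>2 + (\<Sum>j\<in>J. (c j)\<^sup>2) + 2 * (\<Sum>j\<in>J. e i j * c j)"
    if "i \<in> I" for i
  proof -
    have "(\<Sum>j\<in>J. (e i j + r i + c j)\<^sup>2) =
        (\<Sum>j\<in>J. (e i j)\<^sup>2 + (r i)\<^sup>2 + (c j)\<^sup>2 + 2 * r i * e i j + 2 * (e i j * c j) + 2 * r i * c j)"
      by (rule sum.cong) (simp_all add: power2_eq_square algebra_simps)
    also have "\<dots> = (\<Sum>j\<in>J. (e i j)\<^sup>2) + real (card J) * (r i)\<^sup>2 + (\<Sum>j\<in>J. (c j)\<^sup>2)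
        + 2 * r i * (\<Sum>j\<in>J. e i j) + 2 * (\<Sum>j\<in>J. e i j * c j) + 2 * r i * (\<Sum>j\<in>J. c j)"
      by (simp add: sum.distrib sum_distrib_left)
    finally show ?thesis using rows[OF that] cols by simp
  qed
  have cross: "(\<Sum>i\<in>I. w i * (\<Sum>j\<in>J. e i j * c j)) = 0"
  proof -
    have "(\<Sum>i\<in>I. w i * (\<Sum>j\<in>J. e i j * c j)) = (\<Sum>j\<in>J. c j * (\<Sum>i\<in>I. w i * e i j))"
      by (simp add: sum_distrib_left algebra_simps) (rule sum.swap)
    also have "\<dots> = K * (\<Sum>j\<in>J. c j)"
      by (simp add: balanced sum_distrib_left mult.commute)
    finally show ?thesis using cols by simp
  qed
  have "(\<Sum>i\<in>I. w i * (\<Sum>j\<in>J. (e i j + r i + c j)\<^sup>2)) =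
      (\<Sum>i\<in>I. w i * (\<Sum>j\<in>J. (e i j)\<^sup>2) + real (card J) * (w i * (r i)\<^sup>2)
         + w i * (\<Sum>j\<in>J. (c j)\<^sup>2) + 2 * (w i * (\<Sum>j\<in>J. e i j * c j)))"
    by (intro sum.cong refl) (simp add: row_ss distrib_left mult.left_commute)
  also have "\<dots> = (\<Sum>i\<in>I. w i * (\<Sum>j\<in>J. (e i j)\<^sup>2)) + real (card J) * (\<Sum>i\<in>I. w i * (r i)\<^sup>2)
      + (\<Sum>i\<in>I. w i) * (\<Sum>j\<in>J. (c j)\<^sup>2) + 2 * (\<Sum>i\<in>I. w i * (\<Sum>j\<in>J. e i j * c j))"
    by (simp only: sum.distrib flip: sum_distrib_left sum_distrib_right)
  finally show ?thesis using cross by simp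
qed

lemma two_way_ss_decomposition:
  fixes w a mp :: "'i \<Rightarrow> real" and X :: "'i \<Rightarrow> 'j \<Rightarrow> real" and dd dp :: "'j \<Rightarrow> real"
  assumes col_effect: "\<And>j. j \<in> J \<Longrightarrow> (\<Sum>i\<in>I. w i) * dp j = (\<Sum>i\<in>I. w i * (X i j - X i jref))"
    and row_mean: "\<And>i. i \<in> I \<Longrightarrow> real (card J) * mp i = (\<Sum>j\<in>J. X i j - dp j)"
    and shift_mean: "real (card J) * eb = (\<Sum>j\<in>J. dd j - dp j)"
  shows "(\<Sum>i\<in>I. w i * (\<Sum>j\<in>J. (X i j - a i - dd j)\<^sup>2)) =
           (\<Sum>i\<in>I. w i * (\<Sum>j\<in>J. (X i j - mp i - dp j)\<^sup>2))
         + real (card J) * (\<Sum>i\<in>I. w i * (mp i - a i - eb)\<^sup>2)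
         + (\<Sum>i\<in>I. w i) * (\<Sum>j\<in>J. (dd j - dp j - eb)\<^sup>2)"
proof -
  define e where "e i j = X i j - mp i - dp j" for i j
  define K where "K = (\<Sum>i\<in>I. w i * X i jref) - (\<Sum>i\<in>I. w i * mp i)"
  have rows: "(\<Sum>j\<in>J. e i j) = 0" if "i \<in> I" for i
    using row_mean[OF that] by (simp add: e_def sum_subtractf)
  have cols: "(\<Sum>j\<in>J. dp j + eb - dd j) = 0"
    using shift_mean by (simp add: sum_subtractf sum.distrib)
  have balanced: "(\<Sum>i\<in>I. w i * e i j) = K" if "j \<in> J" for j
    using col_effect[OF that]
    by (simp add: e_def K_def algebra_simps sum_subtractf sum.distrib sum_distrib_left sum_distrib_right)
  have "(\<Sum>i\<in>I. w i * (\<Sum>j\<in>J. (X i j - a i - dd j)\<^sup>2)) =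
      (\<Sum>i\<in>I. w i * (\<Sum>j\<in>J. (e i j + (mp i - a i - eb) + (dp j + eb - dd j))\<^sup>2))"
    by (simp add: e_def algebra_simps)
  also have "\<dots> = (\<Sum>i\<in>I. w i * (\<Sum>j\<in>J. (e i j)\<^sup>2))
         + real (card J) * (\<Sum>i\<in>I. w i * (mp i - a i - eb)\<^sup>2)
         + (\<Sum>i\<in>I. w i) * (\<Sum>j\<in>J. (dp j + eb - dd j)\<^sup>2)"
    by (rule two_way_ss_orthogonal[OF rows cols balanced, where r = "\<lambda>i. mp i - a i - eb"])
  also have "(\<Sum>j\<in>J. (dp j + eb - dd j)\<^sup>2) = (\<Sum>j\<in>J. (dd j - dp j - eb)\<^sup>2)"
    by (rule sum.cong) (simp_all add: power2_commute algebra_simps)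
  finally show ?thesis by (simp add: e_def)
qed

definition centered_ss :: "('a \<Rightarrow> real) \<Rightarrow> 'a set \<Rightarrow> ('a \<Rightarrow> real) \<Rightarrow> real" where
  "centered_ss c A y = (\<Sum>s\<in>A. c s * (y s)\<^sup>2) - (\<Sum>s\<in>A. c s * y s)\<^sup>2 / (\<Sum>s\<in>A. c s)"

lemma weighted_ss_about_point:
  fixes c y :: "'a \<Rightarrow> real"
  assumes total: "(\<Sum>s\<in>A. c s) \<noteq> 0"
  shows "(\<Sum>s\<in>A. c s * (y s - v)\<^sup>2) =
           centered_ss c A y + (\<Sum>s\<in>A. c s) * (v - (\<Sum>s\<in>A. c s * y s) / (\<Sum>s\<in>A. c s))\<^sup>2"
proof -
  define T where "T = (\<Sum>s\<in>A. c s)"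
  define B where "B = (\<Sum>s\<in>A. c s * y s)"
  have "(\<Sum>s\<in>A. c s * (y s - v)\<^sup>2) = (\<Sum>s\<in>A. c s * (y s)\<^sup>2 - 2 * v * (c s * y s) + v\<^sup>2 * c s)"
    by (rule sum.cong) (simp_all add: power2_eq_square algebra_simps)
  also have "\<dots> = (\<Sum>s\<in>A. c s * (y s)\<^sup>2) - 2 * v * B + v\<^sup>2 * T"
    by (simp add: sum.distrib sum_subtractf B_def T_def flip: sum_distrib_left)
  also have "\<dots> = (\<Sum>s\<in>A. c s * (y s)\<^sup>2) - B\<^sup>2 / T + T * (v - B / T)\<^sup>2"
    using total by (simp add: T_def field_simps power2_eq_square)
  finally show ?thesis by (simp add: centered_ss_def T_def B_def)
qed

(* The cost contributed by one feature: batch means y_s (weights c_s, variance sigma2) are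
   fitted by a common level v plus batch effects gamma_s for s >= 2, and using any nonzero
   batch effect is charged the penalty alpha. *)
definition group_cost ::
  "real \<Rightarrow> real \<Rightarrow> (nat \<Rightarrow> real) \<Rightarrow> nat \<Rightarrow> (nat \<Rightarrow> real) \<Rightarrow> real \<Rightarrow> (nat \<Rightarrow> real) \<Rightarrow> real" where
  "group_cost \<sigma>2 \<alpha> c S y v \<gamma> =
     1 / (2 * \<sigma>2) * (\<Sum>s=1..S. c s * (y s - v - (if s = 1 then 0 else \<gamma> s))\<^sup>2)
     + \<alpha> * (if (\<Sum>s=2..S. \<bar>\<gamma> s\<bar>) > 0 then 1 else 0)"

(* Either the penalty is paid, or all batch effects vanish and the fit is a single level,
   which is no better than the weighted mean. *)
lemma group_cost_lower_bound:
  assumes \<sigma>2: "\<sigma>2 > 0" and c_nonneg: "\<forall>s\<in>{1..S}. c s \<ge> 0" and total: "(\<Sum>s=1..S. c s) > 0"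
  shows "min (1 / (2 * \<sigma>2) * centered_ss c {1..S} y) \<alpha> \<le> group_cost \<sigma>2 \<alpha> c S y v \<gamma>"
proof (cases "(\<Sum>s=2..S. \<bar>\<gamma> s\<bar>) > 0")
  case True
  have "0 \<le> 1 / (2 * \<sigma>2) * (\<Sum>s=1..S. c s * (y s - v - (if s = 1 then 0 else \<gamma> s))\<^sup>2)"
    using \<sigma>2 c_nonneg by (intro mult_nonneg_nonneg sum_nonneg) auto
  then show ?thesis using True by (simp add: group_cost_def)
next
  case False
  then have "(\<Sum>s=2..S. \<bar>\<gamma> s\<bar>) = 0"
    by (simp add: not_less order_antisym sum_nonneg)
  then have "\<forall>s\<in>{2..S}. \<gamma> s = 0"
    by (subst (asm) sum_nonneg_eq_0_iff) auto
  then have "(\<Sum>s=1..S. c s * (y s - v - (if s = 1 then 0 else \<gamma> s))\<^sup>2) = (\<Sum>s=1..S. c s * (y s - v)\<^sup>2)"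
    by (intro sum.cong) auto
  moreover have "centered_ss c {1..S} y \<le> (\<Sum>s=1..S. c s * (y s - v)\<^sup>2)"
    using total by (simp add: weighted_ss_about_point)
  ultimately have "centered_ss c {1..S} y / (2 * \<sigma>2) \<le>
      (\<Sum>s=1..S. c s * (y s - v - (if s = 1 then 0 else \<gamma> s))\<^sup>2) / (2 * \<sigma>2)"
    using \<sigma>2 by (simp add: divide_right_mono)
  then show ?thesis using False by (simp add: group_cost_def)
qed

lemma group_cost_pooled:
  assumes total: "(\<Sum>s=1..S. c s) \<noteq> 0" and no_effects: "\<forall>s\<in>{2..S}. \<gamma> s = 0"
    and pooled_mean: "v = (\<Sum>s=1..S. c s * y s) / (\<Sum>s=1..S. c s)"
  shows "group_cost \<sigma>2 \<alpha> c S y v \<gamma> = 1 / (2 * \<sigma>2) * centered_ss c {1..S} y"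
proof -
  have "(\<Sum>s=1..S. c s * (y s - v - (if s = 1 then 0 else \<gamma> s))\<^sup>2) = (\<Sum>s=1..S. c s * (y s - v)\<^sup>2)"
    using no_effects by (intro sum.cong) auto
  also have "\<dots> = centered_ss c {1..S} y"
    using total pooled_mean by (simp add: weighted_ss_about_point)
  finally show ?thesis using no_effects by (simp add: group_cost_def)
qed

lemma group_cost_separate:
  assumes \<alpha>: "\<alpha> \<ge> 0" and effects: "\<forall>s\<in>{2..S}. \<gamma> s = y s - y 1" and baseline: "v = y 1"
  shows "group_cost \<sigma>2 \<alpha> c S y v \<gamma> \<le> \<alpha>"
proof -
  have "(\<Sum>s=1..S. c s * (y s - v - (if s = 1 then 0 else \<gamma> s))\<^sup>2) = 0"
    using effects baseline by (intro sum.neutral) auto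
  then show ?thesis using \<alpha> by (simp add: group_cost_def)
qed

lemma group_cost_cong:
  assumes "\<forall>s\<in>{1..S}. y s = y' s"
  shows "group_cost \<sigma>2 \<alpha> c S y v \<gamma> = group_cost \<sigma>2 \<alpha> c S y' v \<gamma>"
  using assms by (simp add: group_cost_def)

lemma gfun_eq_centered_ss:
  "gfun S m ns x sig2 i D =
     1 / (2 * sig2 i) * centered_ss (\<lambda>s. real (ns s)) {1..S} (\<lambda>s. muprime m ns x sig2 s i - D s)"
  by (simp add: gfun_def centered_ss_def of_nat_sum)

definition batch_shift ::
  "nat \<Rightarrow> (nat \<Rightarrow> nat) \<Rightarrow> (nat \<Rightarrow> nat \<Rightarrow> nat \<Rightarrow> real) \<Rightarrow> (nat \<Rightarrow> real) \<Rightarrow> (nat \<Rightarrow> nat \<Rightarrow> real) \<Rightarrow> nat \<Rightarrow> real" where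
  "batch_shift m ns x sig2 d s = (\<Sum>j=1..ns s. d s j - dprime m x sig2 s j) / real (ns s)"

definition resid_ss ::
  "nat \<Rightarrow> nat \<Rightarrow> (nat \<Rightarrow> nat) \<Rightarrow> (nat \<Rightarrow> nat \<Rightarrow> nat \<Rightarrow> real) \<Rightarrow> (nat \<Rightarrow> real) \<Rightarrow> real" where
  "resid_ss S m ns x sig2 =
     (\<Sum>s=1..S. \<Sum>i=1..m. 1 / sig2 i *
        (\<Sum>j=1..ns s. (x s i j - muprime m ns x sig2 s i - dprime m x sig2 s j)\<^sup>2))"

definition shift_ss ::
  "nat \<Rightarrow> nat \<Rightarrow> (nat \<Rightarrow> nat) \<Rightarrow> (nat \<Rightarrow> nat \<Rightarrow> nat \<Rightarrow> real) \<Rightarrow> (nat \<Rightarrow> real) \<Rightarrow> (nat \<Rightarrow> nat \<Rightarrow> real) \<Rightarrow> real" where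
  "shift_ss S m ns x sig2 d =
     (\<Sum>s=1..S. (\<Sum>i=1..m. 1 / sig2 i) *
        (\<Sum>j=1..ns s. (d s j - dprime m x sig2 s j - batch_shift m ns x sig2 d s)\<^sup>2))"

(* The part of the objective belonging to feature i: the overall level of the batch shifts
   is absorbed into mu_i, leaving the relative shifts batch_shift d s - batch_shift d 1. *)
definition mean_term ::
  "nat \<Rightarrow> nat \<Rightarrow> (nat \<Rightarrow> nat) \<Rightarrow> (nat \<Rightarrow> nat \<Rightarrow> nat \<Rightarrow> real) \<Rightarrow> (nat \<Rightarrow> real) \<Rightarrow> (nat \<Rightarrow> real)
   \<Rightarrow> (nat \<Rightarrow> real) \<Rightarrow> (nat \<Rightarrow> nat \<Rightarrow> real) \<Rightarrow> (nat \<Rightarrow> nat \<Rightarrow> real) \<Rightarrow> nat \<Rightarrow> real" where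
  "mean_term S m ns x sig2 alpha mu gam d i =
     group_cost (sig2 i) (alpha i) (\<lambda>s. real (ns s)) S
       (\<lambda>s. muprime m ns x sig2 s i - (batch_shift m ns x sig2 d s - batch_shift m ns x sig2 d 1))
       (mu i + batch_shift m ns x sig2 d 1) (\<lambda>s. gam s i)"

lemma mean_term_eq:
  "mean_term S m ns x sig2 alpha mu gam d i =
     1 / (2 * sig2 i) * (\<Sum>s=1..S. real (ns s) *
       (muprime m ns x sig2 s i - (mu i + (if s = 1 then 0 else gam s i)) - batch_shift m ns x sig2 d s)\<^sup>2)
     + alpha i * (if (\<Sum>s=2..S. \<bar>gam s i\<bar>) > 0 then 1 else 0)"
proof -
  have "(\<Sum>s=1..S. real (ns s) * (muprime m ns x sig2 s i
            - (batch_shift m ns x sig2 d s - batch_shift m ns x sig2 d 1)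
            - (mu i + batch_shift m ns x sig2 d 1) - (if s = 1 then 0 else gam s i))\<^sup>2)
      = (\<Sum>s=1..S. real (ns s) *
          (muprime m ns x sig2 s i - (mu i + (if s = 1 then 0 else gam s i)) - batch_shift m ns x sig2 d s)\<^sup>2)"
    by (intro sum.cong) (simp_all add: algebra_simps)
  then show ?thesis by (simp add: mean_term_def group_cost_def)
qed

definition fitted_d :: "nat \<Rightarrow> (nat \<Rightarrow> nat \<Rightarrow> nat \<Rightarrow> real) \<Rightarrow> (nat \<Rightarrow> real) \<Rightarrow> (nat \<Rightarrow> real) \<Rightarrow> nat \<Rightarrow> nat \<Rightarrow> real" where
  "fitted_d m x sig2 D s j = D s + dprime m x sig2 s j"

definition fitted_gamma ::
  "nat \<Rightarrow> nat \<Rightarrow> (nat \<Rightarrow> nat) \<Rightarrow> (nat \<Rightarrow> nat \<Rightarrow> nat \<Rightarrow> real) \<Rightarrow> (nat \<Rightarrow> real) \<Rightarrow> (nat \<Rightarrow> real)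
   \<Rightarrow> (nat \<Rightarrow> real) \<Rightarrow> nat \<Rightarrow> nat \<Rightarrow> real" where
  "fitted_gamma S m ns x sig2 alpha D s i =
     (if gfun S m ns x sig2 i D < alpha i then 0
      else muprime m ns x sig2 s i - muprime m ns x sig2 1 i - D s)"

definition fitted_mu ::
  "nat \<Rightarrow> nat \<Rightarrow> (nat \<Rightarrow> nat) \<Rightarrow> (nat \<Rightarrow> nat \<Rightarrow> nat \<Rightarrow> real) \<Rightarrow> (nat \<Rightarrow> real) \<Rightarrow> (nat \<Rightarrow> real)
   \<Rightarrow> (nat \<Rightarrow> real) \<Rightarrow> nat \<Rightarrow> real" where
  "fitted_mu S m ns x sig2 alpha D i =
     (if gfun S m ns x sig2 i D < alpha i
      then 1 / real (\<Sum>s=1..S. ns s) * (\<Sum>s=1..S. real (ns s) * (muprime m ns x sig2 s i - D s))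
      else muprime m ns x sig2 1 i)"

context
  fixes S m :: nat and ns :: "nat \<Rightarrow> nat" and x :: "nat \<Rightarrow> nat \<Rightarrow> nat \<Rightarrow> real" and sig2 :: "nat \<Rightarrow> real"
  assumes S_pos: "S \<ge> 1" and m_pos: "m \<ge> 1"
    and ns_pos: "\<forall>s\<in>{1..S}. ns s \<ge> 1" and sig2_pos: "\<forall>i\<in>{1..m}. sig2 i > 0"
begin

lemma batch_ss_decomposition:
  assumes s: "s \<in> {1..S}"
  shows "(\<Sum>i=1..m. 1 / sig2 i * (\<Sum>j=1..ns s. (x s i j - a i - d s j)\<^sup>2)) =
           (\<Sum>i=1..m. 1 / sig2 i * (\<Sum>j=1..ns s. (x s i j - muprime m ns x sig2 s i - dprime m x sig2 s j)\<^sup>2))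
         + real (ns s) * (\<Sum>i=1..m. 1 / sig2 i * (muprime m ns x sig2 s i - a i - batch_shift m ns x sig2 d s)\<^sup>2)
         + (\<Sum>i=1..m. 1 / sig2 i) * (\<Sum>j=1..ns s. (d s j - dprime m x sig2 s j - batch_shift m ns x sig2 d s)\<^sup>2)"
proof -
  have ns: "ns s \<ge> 1" using ns_pos s by auto
  have W: "(\<Sum>i=1..m. 1 / sig2 i) > 0"
    using m_pos sig2_pos by (intro sum_pos) auto
  have card: "real (ns s) = real (card {1..ns s})" by simp
  show ?thesis unfolding card
  proof (rule two_way_ss_decomposition[where jref = 1])
    show "(\<Sum>i=1..m. 1 / sig2 i) * dprime m x sig2 s j = (\<Sum>i=1..m. 1 / sig2 i * (x s i j - x s i 1))" for j
      using W by (simp add: dprime_def)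
    show "real (card {1..ns s}) * muprime m ns x sig2 s i = (\<Sum>j=1..ns s. x s i j - dprime m x sig2 s j)" for i
      using ns by (simp add: muprime_def)
    show "real (card {1..ns s}) * batch_shift m ns x sig2 d s = (\<Sum>j=1..ns s. d s j - dprime m x sig2 s j)"
      using ns by (simp add: batch_shift_def)
  qed
qed

lemma obj_as_batch_sum:
  "obj S m ns x sig2 alpha mu gam d =
     1 / 2 * (\<Sum>s=1..S. \<Sum>i=1..m. 1 / sig2 i *
                (\<Sum>j=1..ns s. (x s i j - (mu i + (if s = 1 then 0 else gam s i)) - d s j)\<^sup>2))
     + (\<Sum>i=1..m. alpha i * (if (\<Sum>s=2..S. \<bar>gam s i\<bar>) > 0 then 1 else 0))"
proof -
  have split_first: "(\<Sum>s=1..S. Q s) = Q 1 + (\<Sum>s=2..S. Q s)" for Q :: "nat \<Rightarrow> real"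
    using S_pos by (simp add: sum.atLeast_Suc_atMost numeral_2_eq_2)
  have later_batches: "(\<Sum>s=2..S. \<Sum>j=1..ns s. (x s i j - (mu i + (if s = 1 then 0 else gam s i)) - d s j)\<^sup>2)
      = (\<Sum>s=2..S. \<Sum>j=1..ns s. (x s i j - mu i - gam s i - d s j)\<^sup>2)" for i
    by (intro sum.cong) (auto simp: algebra_simps)
  have feature: "(\<Sum>j=1..ns 1. (x 1 i j - mu i - d 1 j)\<^sup>2)
      + (\<Sum>s=2..S. \<Sum>j=1..ns s. (x s i j - mu i - gam s i - d s j)\<^sup>2)
      = (\<Sum>s=1..S. \<Sum>j=1..ns s. (x s i j - (mu i + (if s = 1 then 0 else gam s i)) - d s j)\<^sup>2)" for i
    unfolding split_first later_batches by simp
  have "(\<Sum>i=1..m. 1 / (2 * sig2 i) * ((\<Sum>j=1..ns 1. (x 1 i j - mu i - d 1 j)\<^sup>2)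
      + (\<Sum>s=2..S. \<Sum>j=1..ns s. (x s i j - mu i - gam s i - d s j)\<^sup>2)))
    = 1 / 2 * (\<Sum>i=1..m. \<Sum>s=1..S. 1 / sig2 i *
                (\<Sum>j=1..ns s. (x s i j - (mu i + (if s = 1 then 0 else gam s i)) - d s j)\<^sup>2))"
    unfolding feature by (simp add: sum_distrib_left)
  also have "\<dots> = 1 / 2 * (\<Sum>s=1..S. \<Sum>i=1..m. 1 / sig2 i *
                (\<Sum>j=1..ns s. (x s i j - (mu i + (if s = 1 then 0 else gam s i)) - d s j)\<^sup>2))"
    by (subst sum.swap) (rule refl)
  finally show ?thesis by (simp add: obj_def)
qed

lemma objective_decomposition:
  "obj S m ns x sig2 alpha mu gam d =
     1 / 2 * resid_ss S m ns x sig2 + 1 / 2 * shift_ss S m ns x sig2 d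
     + (\<Sum>i=1..m. mean_term S m ns x sig2 alpha mu gam d i)"
proof -
  define a where "a s i = mu i + (if s = 1 then 0 else gam s i)" for s i
  define eb where "eb = batch_shift m ns x sig2 d"
  have "(\<Sum>s=1..S. \<Sum>i=1..m. 1 / sig2 i * (\<Sum>j=1..ns s. (x s i j - a s i - d s j)\<^sup>2)) =
      resid_ss S m ns x sig2
      + (\<Sum>s=1..S. real (ns s) * (\<Sum>i=1..m. 1 / sig2 i * (muprime m ns x sig2 s i - a s i - eb s)\<^sup>2))
      + shift_ss S m ns x sig2 d"
    unfolding resid_ss_def shift_ss_def eb_def sum.distrib[symmetric]
    by (intro sum.cong refl) (rule batch_ss_decomposition)
  also have "(\<Sum>s=1..S. real (ns s) * (\<Sum>i=1..m. 1 / sig2 i * (muprime m ns x sig2 s i - a s i - eb s)\<^sup>2))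
      = (\<Sum>s=1..S. \<Sum>i=1..m. 1 / sig2 i * (real (ns s) * (muprime m ns x sig2 s i - a s i - eb s)\<^sup>2))"
    by (simp add: sum_distrib_left mult.left_commute)
  also have "\<dots> = (\<Sum>i=1..m. 1 / sig2 i * (\<Sum>s=1..S. real (ns s) * (muprime m ns x sig2 s i - a s i - eb s)\<^sup>2))"
    by (subst sum.swap) (simp add: sum_distrib_left)
  also have "\<dots> = 2 * (\<Sum>i=1..m. mean_term S m ns x sig2 alpha mu gam d i)
      - 2 * (\<Sum>i=1..m. alpha i * (if (\<Sum>s=2..S. \<bar>gam s i\<bar>) > 0 then 1 else 0))"
    by (simp add: mean_term_eq a_def eb_def sum.distrib sum_distrib_left)
  finally have "(\<Sum>s=1..S. \<Sum>i=1..m. 1 / sig2 i * (\<Sum>j=1..ns s. (x s i j - a s i - d s j)\<^sup>2)) =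
      resid_ss S m ns x sig2 + 2 * (\<Sum>i=1..m. mean_term S m ns x sig2 alpha mu gam d i)
      - 2 * (\<Sum>i=1..m. alpha i * (if (\<Sum>s=2..S. \<bar>gam s i\<bar>) > 0 then 1 else 0))
      + shift_ss S m ns x sig2 d" by simp
  then show ?thesis unfolding obj_as_batch_sum a_def by linarith
qed

lemma total_batch_size: "(\<Sum>s=1..S. real (ns s)) > 0"
  using S_pos ns_pos by (intro sum_pos) (auto simp: Suc_le_eq)

lemma objective_lower_bound:
  "1 / 2 * resid_ss S m ns x sig2
     + Gfun S m ns x sig2 alpha (\<lambda>s. batch_shift m ns x sig2 d s - batch_shift m ns x sig2 d 1)
   \<le> obj S m ns x sig2 alpha mu gam d"
proof -
  have "min (gfun S m ns x sig2 i (\<lambda>s. batch_shift m ns x sig2 d s - batch_shift m ns x sig2 d 1)) (alpha i)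
      \<le> mean_term S m ns x sig2 alpha mu gam d i" if "i \<in> {1..m}" for i
    unfolding gfun_eq_centered_ss mean_term_def
    using sig2_pos that total_batch_size by (intro group_cost_lower_bound) auto
  then have "Gfun S m ns x sig2 alpha (\<lambda>s. batch_shift m ns x sig2 d s - batch_shift m ns x sig2 d 1)
      \<le> (\<Sum>i=1..m. mean_term S m ns x sig2 alpha mu gam d i)"
    unfolding Gfun_def by (rule sum_mono)
  moreover have "shift_ss S m ns x sig2 d \<ge> 0"
    unfolding shift_ss_def using sig2_pos
    by (intro sum_nonneg mult_nonneg_nonneg) (auto intro: sum_nonneg less_imp_le)
  ultimately show ?thesis by (simp add: objective_decomposition)
qed

lemma objective_at_fit:
  assumes alpha_nonneg: "\<forall>i\<in>{1..m}. alpha i \<ge> 0" and D1: "D 1 = 0"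
  shows "obj S m ns x sig2 alpha (fitted_mu S m ns x sig2 alpha D) (fitted_gamma S m ns x sig2 alpha D)
           (fitted_d m x sig2 D)
         \<le> 1 / 2 * resid_ss S m ns x sig2 + Gfun S m ns x sig2 alpha D"
proof -
  define mu where "mu = fitted_mu S m ns x sig2 alpha D"
  define gam where "gam = fitted_gamma S m ns x sig2 alpha D"
  define d where "d = fitted_d m x sig2 D"
  have shift: "batch_shift m ns x sig2 d s = D s" if "s \<in> {1..S}" for s
  proof -
    have "ns s \<ge> 1" using ns_pos that by auto
    then show ?thesis by (simp add: batch_shift_def d_def fitted_d_def)
  qed
  have "shift_ss S m ns x sig2 d = 0"
    unfolding shift_ss_def by (intro sum.neutral ballI) (simp add: shift, simp add: d_def fitted_d_def)
  moreover have "mean_term S m ns x sig2 alpha mu gam d i \<le> min (gfun S m ns x sig2 i D) (alpha i)"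
    if i: "i \<in> {1..m}" for i
  proof -
    define y where "y s = muprime m ns x sig2 s i - D s" for s
    have D1_shift: "batch_shift m ns x sig2 d 1 = 0" using shift[of 1] S_pos D1 by simp
    have cost: "mean_term S m ns x sig2 alpha mu gam d i
        = group_cost (sig2 i) (alpha i) (\<lambda>s. real (ns s)) S y (mu i) (\<lambda>s. gam s i)"
      unfolding mean_term_def D1_shift diff_zero add_0_right using shift
      by (intro group_cost_cong) (simp add: y_def)
    show ?thesis
    proof (cases "gfun S m ns x sig2 i D < alpha i")
      case True
      have "group_cost (sig2 i) (alpha i) (\<lambda>s. real (ns s)) S y (mu i) (\<lambda>s. gam s i)
          = gfun S m ns x sig2 i D"
        unfolding gfun_eq_centered_ss y_def[symmetric] using True total_batch_size
        by (intro group_cost_pooled) (auto simp: gam_def fitted_gamma_def mu_def fitted_mu_def y_def of_nat_sum)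
      then show ?thesis using True cost by simp
    next
      case False
      have "group_cost (sig2 i) (alpha i) (\<lambda>s. real (ns s)) S y (mu i) (\<lambda>s. gam s i) \<le> alpha i"
        using False alpha_nonneg i D1
        by (intro group_cost_separate) (auto simp: gam_def fitted_gamma_def mu_def fitted_mu_def y_def)
      then show ?thesis using False cost by simp
    qed
  qed
  then have "(\<Sum>i=1..m. mean_term S m ns x sig2 alpha mu gam d i) \<le> Gfun S m ns x sig2 alpha D"
    unfolding Gfun_def by (rule sum_mono)
  ultimately show ?thesis unfolding mu_def gam_def d_def by (simp add: objective_decomposition)
qed

end

theorem proposition1:
  fixes S m :: nat and ns :: "nat \<Rightarrow> nat" and x :: "nat \<Rightarrow> nat \<Rightarrow> nat \<Rightarrow> real"
    and sig2 alpha :: "nat \<Rightarrow> real" and D :: "nat \<Rightarrow> real"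
  assumes hS: "S \<ge> 2" and hm: "m \<ge> 1"
    and hns: "\<forall>s\<in>{1..S}. ns s \<ge> 1"
    and hsig: "\<forall>i\<in>{1..m}. sig2 i > 0"
    and halpha: "\<forall>i\<in>{1..m}. alpha i > 0"
    and hD1: "D 1 = 0"
    and hDmin: "\<forall>D'. D' 1 = 0 \<longrightarrow> Gfun S m ns x sig2 alpha D \<le> Gfun S m ns x sig2 alpha D'"
  defines "n \<equiv> (\<Sum>s=1..S. ns s)"
  defines "dhat \<equiv> (\<lambda>s j. D s + dprime m x sig2 s j)"
  defines "ghat \<equiv> (\<lambda>s i. if gfun S m ns x sig2 i D < alpha i then 0
                         else muprime m ns x sig2 s i - muprime m ns x sig2 1 i - D s)"
  defines "muhat \<equiv> (\<lambda>i. if gfun S m ns x sig2 i D < alpha i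
                         then (1 / real n) * (\<Sum>s=1..S. real (ns s) * (muprime m ns x sig2 s i - D s))
                         else muprime m ns x sig2 1 i)"
  shows "dhat 1 1 = 0 \<and>
         (\<forall>mu gam d. d 1 1 = 0 \<longrightarrow>
            obj S m ns x sig2 alpha muhat ghat dhat \<le> obj S m ns x sig2 alpha mu gam d)"
proof (intro conjI allI impI)
  show "dhat 1 1 = 0" using hD1 by (simp add: dhat_def dprime_def)
  have S1: "S \<ge> 1" using hS by simp
  have fit: "muhat = fitted_mu S m ns x sig2 alpha D" "ghat = fitted_gamma S m ns x sig2 alpha D"
    "dhat = fitted_d m x sig2 D"
    by (simp_all add: fun_eq_iff muhat_def n_def fitted_mu_def ghat_def fitted_gamma_def
        dhat_def fitted_d_def)
  fix mu :: "nat \<Rightarrow> real" and gam d :: "nat \<Rightarrow> nat \<Rightarrow> real"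
  define D' where "D' s = batch_shift m ns x sig2 d s - batch_shift m ns x sig2 d 1" for s
  have "obj S m ns x sig2 alpha muhat ghat dhat \<le> 1 / 2 * resid_ss S m ns x sig2 + Gfun S m ns x sig2 alpha D"
    unfolding fit using halpha hD1 by (intro objective_at_fit[OF S1 hm hns hsig]) auto
  also have "\<dots> \<le> 1 / 2 * resid_ss S m ns x sig2 + Gfun S m ns x sig2 alpha D'"
    using hDmin by (simp add: D'_def)
  also have "\<dots> \<le> obj S m ns x sig2 alpha mu gam d"
    unfolding D'_def by (rule objective_lower_bound[OF S1 hm hns hsig])
  finally show "obj S m ns x sig2 alpha muhat ghat dhat \<le> obj S m ns x sig2 alpha mu gam d" .
qed

end
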